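(* Let $m\ge3$. The Terwilliger algebra $T=T(x_0)$ of the doubled Odd graph $2.O_{m+1}$ coincides with the centralizer algebra $\mathcal{A}$ of the stabilizer of $x_0$ in $\mathrm{Aut}(2.O_{m+1})$.
   Context: $S=\{1,\dots,2m+1\}$, $X=\binom{S}{m}\cup\binom{S}{m+1}$; the doubled Odd graph $2.O_{m+1}$ has vertex set $X$, two vertices adjacent iff one is a proper subset of the other, with distance $\partial$. $x_0=\{1,\dots,m\}$. $T$ is the subalgebra of complex $X\times X$ matrices generated by the adjacency matrix $A_1$ and the diagonal matrices $E^*_i$ ($0\le i\le 2m+1$) with $(y,y)$-entry $1$ iff $\partial(x_0,y)=i$. The stabilizer of $x_0$ in $\mathrm{Aut}(2.O_{m+1})$ is $G=\mathrm{Sym}(x_0)\times\mathrm{Sym}(S\setminus x_0)$ acting naturally on $X$; $\mathcal{A}$ is the set of complex $X\times X$ matrices $B$ with $B_{\sigma(y),\sigma(z)}=B_{y,z}$ for all $\sigma\in G$, $y,z\in X$. *)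

theory Defs
  imports Complex_Main "HOL-Combinatorics.Permutations"
begin

definition S_set :: "nat \<Rightarrow> nat set" where
  "S_set m = {1..2*m+1}"

definition X_set :: "nat \<Rightarrow> nat set set" where
  "X_set m = {y. y \<subseteq> S_set m \<and> (card y = m \<or> card y = m + 1)}"

definition x0 :: "nat \<Rightarrow> nat set" where
  "x0 m = {1..m}"

definition adj :: "nat \<Rightarrow> nat set \<Rightarrow> nat set \<Rightarrow> bool" where
  "adj m y z \<longleftrightarrow> y \<in> X_set m \<and> z \<in> X_set m \<and> (y \<subset> z \<or> z \<subset> y)"

inductive walk :: "nat \<Rightarrow> nat \<Rightarrow> nat set \<Rightarrow> nat set \<Rightarrow> bool" for m where
  walk0: "y \<in> X_set m \<Longrightarrow> walk m 0 y y"
| walkS: "adj m y w \<Longrightarrow> walk m n w z \<Longrightarrow> walk m (Suc n) y z"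

definition dist_O :: "nat \<Rightarrow> nat set \<Rightarrow> nat set \<Rightarrow> nat" where
  "dist_O m y z = (LEAST n. walk m n y z)"

text \<open>Complex X x X matrices are represented as functions vanishing outside X x X.\<close>
type_synonym cmat = "nat set \<Rightarrow> nat set \<Rightarrow> complex"

definition is_mat :: "nat \<Rightarrow> cmat \<Rightarrow> bool" where
  "is_mat m B \<longleftrightarrow> (\<forall>y z. (y \<notin> X_set m \<or> z \<notin> X_set m) \<longrightarrow> B y z = 0)"

definition mat_add :: "cmat \<Rightarrow> cmat \<Rightarrow> cmat" where
  "mat_add B C = (\<lambda>y z. B y z + C y z)"

definition mat_smult :: "complex \<Rightarrow> cmat \<Rightarrow> cmat" where
  "mat_smult c B = (\<lambda>y z. c * B y z)"

definition mat_mult :: "nat \<Rightarrow> cmat \<Rightarrow> cmat \<Rightarrow> cmat" where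
  "mat_mult m B C = (\<lambda>y z. if y \<in> X_set m \<and> z \<in> X_set m
      then \<Sum>w\<in>X_set m. B y w * C w z else 0)"

definition mat_one :: "nat \<Rightarrow> cmat" where
  "mat_one m = (\<lambda>y z. if y \<in> X_set m \<and> y = z then 1 else 0)"

definition adj_mat :: "nat \<Rightarrow> cmat" where
  "adj_mat m = (\<lambda>y z. if adj m y z then 1 else 0)"

definition dual_idem :: "nat \<Rightarrow> nat \<Rightarrow> cmat" where
  "dual_idem m i = (\<lambda>y z. if y \<in> X_set m \<and> y = z \<and> dist_O m (x0 m) y = i then 1 else 0)"

inductive_set terwilliger :: "nat \<Rightarrow> cmat set" for m where
  gen_one: "mat_one m \<in> terwilliger m"
| gen_adj: "adj_mat m \<in> terwilliger m"
| gen_dual: "i \<le> 2*m+1 \<Longrightarrow> dual_idem m i \<in> terwilliger m"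
| cl_add: "B \<in> terwilliger m \<Longrightarrow> C \<in> terwilliger m \<Longrightarrow> mat_add B C \<in> terwilliger m"
| cl_smult: "B \<in> terwilliger m \<Longrightarrow> mat_smult c B \<in> terwilliger m"
| cl_mult: "B \<in> terwilliger m \<Longrightarrow> C \<in> terwilliger m \<Longrightarrow> mat_mult m B C \<in> terwilliger m"

text \<open>The stabilizer G = Sym(x0) x Sym(S - x0), as permutations of S fixing x0 setwise.\<close>
definition stab :: "nat \<Rightarrow> (nat \<Rightarrow> nat) set" where
  "stab m = {\<sigma>. \<sigma> permutes S_set m \<and> \<sigma> ` x0 m = x0 m}"

definition centralizer :: "nat \<Rightarrow> cmat set" where
  "centralizer m = {B. is_mat m B \<and>
     (\<forall>\<sigma>\<in>stab m. \<forall>y\<in>X_set m. \<forall>z\<in>X_set m. B (\<sigma> ` y) (\<sigma> ` z) = B y z)}"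

end

theory Submission
  imports Defs
begin

text \<open>
  The distance between two vertices is the size of their symmetric difference, and two pairs
  \<open>(y, z)\<close>, \<open>(y', z')\<close> lie in the same orbit of \<open>G\<close> exactly when the eight Venn regions
  cut out of \<open>S\<close> by \<open>x0, y, z\<close> and by \<open>x0, y', z'\<close> have the same sizes. Since the generators
  of \<open>T\<close> are \<open>G\<close>-invariant, \<open>T \<subseteq> \<A>\<close>, and \<open>\<A>\<close> is spanned by the indicator matrices of the orbits.
  These lie in \<open>T\<close> by induction on \<open>\<partial>(y, z)\<close>: for a neighbour \<open>w\<close> of \<open>z\<close> closer to \<open>y\<close>, the
  product of the orbit matrix of \<open>(y, w)\<close> with \<open>A\<^sub>1\<close> and \<open>E\<^sup>*\<^sub>i\<close>, \<open>i = \<partial>(x0, z)\<close>, lies in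
  \<open>T \<subseteq> \<A>\<close>. Its nonzero entries are at pairs \<open>(y', z')\<close> with \<open>\<partial>(x0, z') = \<partial>(x0, z)\<close> and a
  neighbour \<open>w'\<close> of \<open>z'\<close> such that \<open>(y', w')\<close> is in the orbit of \<open>(y, w)\<close>; such a pair is either
  closer than \<open>(y, z)\<close> or, by a count of the Venn regions, in the orbit of \<open>(y, z)\<close>.
\<close>

lemma finite_S_set [simp]: "finite (S_set m)"
  by (simp add: S_set_def)

lemma x0_subset_S_set: "x0 m \<subseteq> S_set m"
  by (auto simp: x0_def S_set_def)

lemma card_x0: "card (x0 m) = m"
  by (simp add: x0_def)

lemma card_S_set_minus_x0: "card (S_set m - x0 m) = m + 1"
proof -
  have "S_set m - x0 m = {m+1..2*m+1}"
    by (auto simp: S_set_def x0_def)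
  then show ?thesis by simp
qed

lemma x0_in_X_set: "x0 m \<in> X_set m"
  using x0_subset_S_set card_x0 by (auto simp: X_set_def)

lemma X_set_subset: "y \<in> X_set m \<Longrightarrow> y \<subseteq> S_set m"
  by (simp add: X_set_def)

lemma finite_X_set_elem: "y \<in> X_set m \<Longrightarrow> finite y"
  using finite_subset[OF X_set_subset finite_S_set] .

lemma card_X_set_elem: "y \<in> X_set m \<Longrightarrow> card y = m \<or> card y = m + 1"
  by (simp add: X_set_def)

lemma finite_X_set [simp]: "finite (X_set m)"
  by (rule finite_subset[of _ "Pow (S_set m)"]) (auto simp: X_set_def)

section \<open>Distance is the size of the symmetric difference\<close>

lemma card_sym_diff_triangle:
  assumes "finite u" "finite v" "finite w"
  shows "card (sym_diff u v) \<le> card (sym_diff u w) + card (sym_diff w v)"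
proof -
  have "card (sym_diff u v) \<le> card (sym_diff u w \<union> sym_diff w v)"
    by (rule card_mono) (use assms in auto)
  also have "\<dots> \<le> card (sym_diff u w) + card (sym_diff w v)"
    by (rule card_Un_le)
  finally show ?thesis .
qed

lemma card_sym_diff_psubset:
  assumes "a \<in> X_set m" "b \<in> X_set m" "a \<subset> b"
  shows "card (sym_diff a b) = 1"
proof -
  have "card a < card b"
    using assms by (simp add: psubset_card_mono finite_X_set_elem)
  then have "card b = card a + 1"
    using card_X_set_elem[OF assms(1)] card_X_set_elem[OF assms(2)] by auto
  moreover have "sym_diff a b = b - a"
    using assms(3) by auto
  ultimately show ?thesis
    using assms by (simp add: card_Diff_subset finite_X_set_elem)
qed

lemma adj_card_sym_diff: "adj m w z \<Longrightarrow> card (sym_diff w z) = 1"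
  unfolding adj_def using card_sym_diff_psubset[of w m z] card_sym_diff_psubset[of z m w]
  by (auto simp: Un_commute)

lemma adj_sym: "adj m y z = adj m z y"
  by (auto simp: adj_def)

lemma exists_adj_closer:
  assumes y: "y \<in> X_set m" and z: "z \<in> X_set m" and "y \<noteq> z"
  obtains w where "w \<in> X_set m" "adj m w z" "card (sym_diff y w) + 1 = card (sym_diff y z)"
proof -
  have fin: "finite y" "finite z"
    using y z by (simp_all add: finite_X_set_elem)
  \<comment> \<open>\<open>w\<close> toggles one element of \<open>sym_diff y z\<close> in \<open>z\<close>, chosen so that \<open>|w| \<in> {m, m+1}\<close>\<close>
  obtain e where e: "e \<in> y - z \<and> card z = m \<or> e \<in> z - y \<and> card z = m + 1"
  proof (cases "card z = m")
    case True
    have "\<not> y \<subseteq> z"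
    proof
      assume "y \<subseteq> z"
      moreover have "card z \<le> card y" using True card_X_set_elem[OF y] by auto
      ultimately show False using card_seteq[OF fin(2)] \<open>y \<noteq> z\<close> by blast
    qed
    then show ?thesis using True that by blast
  next
    case False
    then have "card z = m + 1" using card_X_set_elem[OF z] by simp
    moreover have "\<not> z \<subseteq> y"
    proof
      assume "z \<subseteq> y"
      moreover have "card y \<le> card z" using \<open>card z = m + 1\<close> card_X_set_elem[OF y] by auto
      ultimately show False using card_seteq[OF fin(1)] \<open>y \<noteq> z\<close> by blast
    qed
    ultimately show ?thesis using that by blast
  qed
  define w where "w = sym_diff z {e}"
  have "w \<subseteq> S_set m"
    using e X_set_subset[OF y] X_set_subset[OF z] by (auto simp: w_def)
  moreover have "card w = m + 1 \<and> z \<subset> w \<or> card w = m \<and> w \<subset> z"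
  proof (cases "e \<in> z")
    case True
    then have "w = z - {e}" by (auto simp: w_def)
    then show ?thesis using True e fin by auto
  next
    case False
    then have "w = insert e z" by (auto simp: w_def)
    then show ?thesis using False e fin by auto
  qed
  ultimately have "w \<in> X_set m" "adj m w z"
    using z by (auto simp: X_set_def adj_def)
  moreover have "sym_diff y z = insert e (sym_diff y w)" "e \<notin> sym_diff y w"
    using e by (auto simp: w_def)
  then have "card (sym_diff y z) = card (sym_diff y w) + 1"
    using fin by (simp add: w_def)
  ultimately show ?thesis using that by simp
qed

lemma walk_in_X_set: "walk m n y z \<Longrightarrow> y \<in> X_set m \<and> z \<in> X_set m"
  by (induction rule: walk.induct) (auto simp: adj_def)

lemma walk_card_sym_diff_le: "walk m n y z \<Longrightarrow> card (sym_diff y z) \<le> n"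
proof (induction rule: walk.induct)
  case (walkS y w n z)
  have "y \<in> X_set m" "w \<in> X_set m" "z \<in> X_set m"
    using walkS.hyps walk_in_X_set by (auto simp: adj_def)
  then have "card (sym_diff y z) \<le> card (sym_diff y w) + card (sym_diff w z)"
    by (intro card_sym_diff_triangle) (simp_all add: finite_X_set_elem)
  then show ?case
    using adj_card_sym_diff[OF walkS.hyps(1)] walkS.IH by simp
qed simp

lemma walk_card_sym_diff:
  "y \<in> X_set m \<Longrightarrow> z \<in> X_set m \<Longrightarrow> walk m (card (sym_diff y z)) y z"
proof (induction "card (sym_diff y z)" arbitrary: y)
  case 0
  then have "y = z" using finite_X_set_elem by auto
  with 0 show ?case by (simp add: walk0)
next
  case (Suc n)
  then have "z \<noteq> y" by auto
  then obtain w where w: "w \<in> X_set m" "adj m w y" "card (sym_diff z w) + 1 = card (sym_diff z y)"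
    using exists_adj_closer[OF Suc.prems(2,1)] by blast
  then have "card (sym_diff w z) = n"
    using Suc.hyps(2) by (simp add: Un_commute)
  then have "walk m n w z"
    using Suc.hyps(1) w(1) Suc.prems(2) by metis
  with w(2) show ?case
    using Suc.hyps(2) adj_sym walkS by metis
qed

lemma dist_O_eq_card_sym_diff:
  assumes "y \<in> X_set m" "z \<in> X_set m"
  shows "dist_O m y z = card (sym_diff y z)"
  unfolding dist_O_def
  by (rule Least_equality) (use assms walk_card_sym_diff walk_card_sym_diff_le in blast)+

section \<open>Venn profiles and the orbits of the stabilizer\<close>

type_synonym venn_counts = "bool \<times> bool \<times> bool \<Rightarrow> nat"

definition profile :: "nat \<Rightarrow> nat set \<Rightarrow> nat set \<Rightarrow> venn_counts" where
  "profile m y z c = card {x \<in> S_set m. (x \<in> x0 m, x \<in> y, x \<in> z) = c}"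

definition vertex_profile :: "nat \<Rightarrow> nat set \<Rightarrow> bool \<times> bool \<Rightarrow> nat" where
  "vertex_profile m y c = card {x \<in> S_set m. (x \<in> x0 m, x \<in> y) = c}"

lemma card_filter_split:
  "finite S \<Longrightarrow> card {x \<in> S. P x} = card {x \<in> S. P x \<and> Q x} + card {x \<in> S. P x \<and> \<not> Q x}"
  by (subst card_Un_disjoint[symmetric]) (auto intro: arg_cong[where f = card])

lemma profile_sum_right:
  "profile m y z (a, b, True) + profile m y z (a, b, False) = vertex_profile m y (a, b)"
  unfolding profile_def vertex_profile_def
  using card_filter_split[of "S_set m" "\<lambda>x. (x \<in> x0 m, x \<in> y) = (a, b)" "\<lambda>x. x \<in> z"]
  by (simp add: conj_assoc)

lemma profile_sum_middle:
  "profile m y z (a, True, c) + profile m y z (a, False, c) = vertex_profile m z (a, c)"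
  unfolding profile_def vertex_profile_def
  using card_filter_split[of "S_set m" "\<lambda>x. (x \<in> x0 m, x \<in> z) = (a, c)" "\<lambda>x. x \<in> y"]
  by (simp add: conj_ac)

lemma vertex_profile_sum_x0:
  "vertex_profile m y (True, True) + vertex_profile m y (True, False) = m"
  unfolding vertex_profile_def
  using card_filter_split[of "S_set m" "\<lambda>x. x \<in> x0 m" "\<lambda>x. x \<in> y"] card_x0[of m]
    Int_absorb1[OF x0_subset_S_set, of m]
  by (simp add: Collect_conj_eq)

lemma vertex_profile_sum_outside_x0:
  "vertex_profile m y (False, True) + vertex_profile m y (False, False) = m + 1"
proof -
  have "{x \<in> S_set m. x \<notin> x0 m} = S_set m - x0 m" by blast
  then show ?thesis
    unfolding vertex_profile_def
    using card_filter_split[of "S_set m" "\<lambda>x. x \<notin> x0 m" "\<lambda>x. x \<in> y"] card_S_set_minus_x0[of m]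
    by simp
qed

lemma card_eq_vertex_profile:
  assumes "y \<subseteq> S_set m"
  shows "card y = vertex_profile m y (True, True) + vertex_profile m y (False, True)"
proof -
  have "{x \<in> S_set m. x \<in> y} = y" using assms by blast
  then show ?thesis
    unfolding vertex_profile_def
    using card_filter_split[of "S_set m" "\<lambda>x. x \<in> y" "\<lambda>x. x \<in> x0 m"]
    by (simp add: conj_commute)
qed

lemma card_sym_diff_x0_eq_vertex_profile:
  assumes "y \<subseteq> S_set m"
  shows "card (sym_diff (x0 m) y) = vertex_profile m y (True, False) + vertex_profile m y (False, True)"
proof -
  let ?D = "\<lambda>x. x \<in> sym_diff (x0 m) y"
  have "{x \<in> S_set m. ?D x} = sym_diff (x0 m) y"
    using assms x0_subset_S_set[of m] by blast
  moreover have "{x \<in> S_set m. ?D x \<and> x \<in> x0 m} = {x \<in> S_set m. (x \<in> x0 m, x \<in> y) = (True, False)}"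
    "{x \<in> S_set m. ?D x \<and> x \<notin> x0 m} = {x \<in> S_set m. (x \<in> x0 m, x \<in> y) = (False, True)}"
    by auto
  ultimately show ?thesis
    unfolding vertex_profile_def
    using card_filter_split[of "S_set m" ?D "\<lambda>x. x \<in> x0 m"] by simp
qed

lemma card_sym_diff_eq_profile:
  assumes "y \<subseteq> S_set m" "z \<subseteq> S_set m"
  shows "card (sym_diff y z) = profile m y z (True, True, False) + profile m y z (True, False, True)
     + profile m y z (False, True, False) + profile m y z (False, False, True)"
proof -
  let ?D = "\<lambda>x. x \<in> sym_diff y z"
  have side: "card {x \<in> S_set m. ?D x \<and> (x \<in> x0 m) = a}
      = profile m y z (a, True, False) + profile m y z (a, False, True)" for a
  proof -
    have "{x \<in> S_set m. (?D x \<and> (x \<in> x0 m) = a) \<and> x \<in> y}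
        = {x \<in> S_set m. (x \<in> x0 m, x \<in> y, x \<in> z) = (a, True, False)}"
         "{x \<in> S_set m. (?D x \<and> (x \<in> x0 m) = a) \<and> x \<notin> y}
        = {x \<in> S_set m. (x \<in> x0 m, x \<in> y, x \<in> z) = (a, False, True)}"
      by auto
    then show ?thesis
      unfolding profile_def
      using card_filter_split[of "S_set m" "\<lambda>x. ?D x \<and> (x \<in> x0 m) = a" "\<lambda>x. x \<in> y"] by simp
  qed
  have "{x \<in> S_set m. ?D x} = sym_diff y z"
    using assms by blast
  then show ?thesis
    using card_filter_split[of "S_set m" ?D "\<lambda>x. x \<in> x0 m"] side[of True] side[of False] by simp
qed

lemma profile_diag: "profile m y y (a, b, c) = (if b = c then vertex_profile m y (a, b) else 0)"
proof (cases "b = c")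
  case True
  then have "{x \<in> S_set m. (x \<in> x0 m, x \<in> y, x \<in> y) = (a, b, c)} = {x \<in> S_set m. (x \<in> x0 m, x \<in> y) = (a, b)}"
    by auto
  with True show ?thesis unfolding profile_def vertex_profile_def by simp
next
  case False
  then have "{x \<in> S_set m. (x \<in> x0 m, x \<in> y, x \<in> y) = (a, b, c)} = {}"
    by auto
  with False show ?thesis unfolding profile_def by simp
qed

lemma dist_x0_eq_vertex_profile:
  "y \<in> X_set m \<Longrightarrow> dist_O m (x0 m) y = vertex_profile m y (True, False) + vertex_profile m y (False, True)"
  by (simp add: dist_O_eq_card_sym_diff x0_in_X_set card_sym_diff_x0_eq_vertex_profile X_set_subset)

lemma dist_x0_le: "y \<in> X_set m \<Longrightarrow> dist_O m (x0 m) y \<le> 2 * m + 1"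
  using dist_x0_eq_vertex_profile vertex_profile_sum_x0[of m y] vertex_profile_sum_outside_x0[of m y]
  by simp

lemma vertex_profile_eq_if_dist_eq:
  assumes y: "y \<in> X_set m" and y': "y' \<in> X_set m"
    and dist: "dist_O m (x0 m) y = dist_O m (x0 m) y'"
  shows "vertex_profile m y = vertex_profile m y'"
proof -
  \<comment> \<open>\<open>|y| + \<partial>(x0,y) = m + 2 |y - x0|\<close> and \<open>|y| \<in> {m, m+1}\<close>, so the distance fixes \<open>|y|\<close> by parity\<close>
  have "vertex_profile m y (True, True) = vertex_profile m y' (True, True)"
    "vertex_profile m y (False, True) = vertex_profile m y' (False, True)"
    using dist dist_x0_eq_vertex_profile[OF y] dist_x0_eq_vertex_profile[OF y']
      vertex_profile_sum_x0[of m y] vertex_profile_sum_x0[of m y']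
      card_eq_vertex_profile[OF X_set_subset[OF y]] card_eq_vertex_profile[OF X_set_subset[OF y']]
      card_X_set_elem[OF y] card_X_set_elem[OF y']
    by linarith+
  moreover have "vertex_profile m y (True, False) = vertex_profile m y' (True, False)"
    "vertex_profile m y (False, False) = vertex_profile m y' (False, False)"
    using calculation vertex_profile_sum_x0[of m y] vertex_profile_sum_x0[of m y']
      vertex_profile_sum_outside_x0[of m y] vertex_profile_sum_outside_x0[of m y']
    by simp_all
  ultimately show ?thesis
    by (simp add: fun_eq_iff all_bool_eq)
qed

lemma permutes_of_fibre_cards_eq:
  assumes fin: "finite S" and eq: "\<And>c. card {x \<in> S. f x = c} = card {x \<in> S. g x = c}"
  obtains \<sigma> where "\<sigma> permutes S" "\<And>x. x \<in> S \<Longrightarrow> g (\<sigma> x) = f x"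
proof -
  have "\<exists>h. bij_betw h {x \<in> S. f x = c} {x \<in> S. g x = c}" for c
    by (rule finite_same_card_bij) (use fin eq[of c] in simp_all)
  then obtain h where h: "\<And>c. bij_betw (h c) {x \<in> S. f x = c} {x \<in> S. g x = c}"
    by metis
  define \<sigma> where "\<sigma> x = (if x \<in> S then h (f x) x else x)" for x
  have fibre: "\<sigma> x \<in> {x' \<in> S. g x' = f x}" if "x \<in> S" for x
    using bij_betw_apply[OF h[of "f x"]] that by (simp add: \<sigma>_def)
  have "inj_on \<sigma> S"
  proof (rule inj_onI)
    fix x1 x2 assume x: "x1 \<in> S" "x2 \<in> S" "\<sigma> x1 = \<sigma> x2"
    then have "f x1 = f x2" using fibre[OF x(1)] fibre[OF x(2)] by simp
    with x show "x1 = x2"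
      using bij_betw_imp_inj_on[OF h[of "f x1"]] by (auto simp: \<sigma>_def dest: inj_onD)
  qed
  moreover have "S \<subseteq> \<sigma> ` S"
  proof
    fix w assume w: "w \<in> S"
    then obtain x where "x \<in> S" "f x = g w" "w = h (g w) x"
      using bij_betw_imp_surj_on[OF h[of "g w"]] by blast
    then have "\<sigma> x = w" by (simp add: \<sigma>_def)
    with \<open>x \<in> S\<close> show "w \<in> \<sigma> ` S" by blast
  qed
  ultimately have "\<sigma> permutes S"
    using fibre by (intro bij_imp_permutes) (auto simp: bij_betw_def \<sigma>_def)
  with fibre show ?thesis using that by blast
qed

lemma permutes_image_eqI:
  assumes "\<sigma> permutes S" "A \<subseteq> S" "B \<subseteq> S" "\<And>x. x \<in> S \<Longrightarrow> \<sigma> x \<in> B \<longleftrightarrow> x \<in> A"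
  shows "\<sigma> ` A = B"
proof
  show "\<sigma> ` A \<subseteq> B" using assms(2,4) by blast
  show "B \<subseteq> \<sigma> ` A"
  proof
    fix b assume "b \<in> B"
    then obtain x where "x \<in> S" "b = \<sigma> x"
      using permutes_image[OF assms(1)] assms(3) by blast
    with \<open>b \<in> B\<close> show "b \<in> \<sigma> ` A" using assms(4) by blast
  qed
qed

lemma stab_orbit_of_profile_eq:
  assumes "y \<subseteq> S_set m" "z \<subseteq> S_set m" "y' \<subseteq> S_set m" "z' \<subseteq> S_set m"
    and "profile m y z = profile m y' z'"
  obtains \<sigma> where "\<sigma> \<in> stab m" "\<sigma> ` y = y'" "\<sigma> ` z = z'"
proof -
  let ?f = "\<lambda>x. (x \<in> x0 m, x \<in> y, x \<in> z)" and ?g = "\<lambda>x. (x \<in> x0 m, x \<in> y', x \<in> z')"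
  have "card {x \<in> S_set m. ?f x = c} = card {x \<in> S_set m. ?g x = c}" for c
    using fun_cong[OF assms(5), of c] by (simp add: profile_def)
  then obtain \<sigma> where \<sigma>: "\<sigma> permutes S_set m" and colour: "\<And>x. x \<in> S_set m \<Longrightarrow> ?g (\<sigma> x) = ?f x"
    by (rule permutes_of_fibre_cards_eq[OF finite_S_set]) blast
  have "\<sigma> ` x0 m = x0 m" "\<sigma> ` y = y'" "\<sigma> ` z = z'"
    by (rule permutes_image_eqI[OF \<sigma>]; use colour x0_subset_S_set assms(1-4) in simp)+
  with \<sigma> show ?thesis using that by (simp add: stab_def)
qed

lemma stab_permutes: "\<sigma> \<in> stab m \<Longrightarrow> \<sigma> permutes S_set m"
  by (simp add: stab_def)

lemma stab_image_x0: "\<sigma> \<in> stab m \<Longrightarrow> \<sigma> ` x0 m = x0 m"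
  by (simp add: stab_def)

lemma stab_inj: "\<sigma> \<in> stab m \<Longrightarrow> inj \<sigma>"
  using permutes_inj stab_permutes by blast

lemma stab_image_in_X_set:
  assumes "\<sigma> \<in> stab m" "y \<in> X_set m"
  shows "\<sigma> ` y \<in> X_set m"
proof -
  have "\<sigma> ` y \<subseteq> S_set m"
    using X_set_subset[OF assms(2)] permutes_image[OF stab_permutes[OF assms(1)]] by blast
  moreover have "card (\<sigma> ` y) = card y"
    using card_image[OF inj_on_subset[OF stab_inj[OF assms(1)]]] by blast
  ultimately show ?thesis using assms(2) by (simp add: X_set_def)
qed

lemma stab_image_eq_iff: "\<sigma> \<in> stab m \<Longrightarrow> \<sigma> ` y = \<sigma> ` z \<longleftrightarrow> y = z"
  by (simp add: inj_image_eq_iff stab_inj)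

lemma stab_inv:
  assumes "\<sigma> \<in> stab m"
  shows "inv \<sigma> \<in> stab m"
proof -
  have "inv \<sigma> ` x0 m = inv \<sigma> ` \<sigma> ` x0 m"
    using stab_image_x0[OF assms] by simp
  also have "\<dots> = x0 m"
    using permutes_inverses(2)[OF stab_permutes[OF assms]] by (simp add: image_comp)
  finally show ?thesis
    using permutes_inv[OF stab_permutes[OF assms]] by (simp add: stab_def)
qed

lemma stab_bij_betw_X_set:
  assumes "\<sigma> \<in> stab m"
  shows "bij_betw ((`) \<sigma>) (X_set m) (X_set m)"
proof (rule bij_betw_byWitness[where f' = "(`) (inv \<sigma>)"])
  show "\<forall>y\<in>X_set m. inv \<sigma> ` \<sigma> ` y = y" "\<forall>y\<in>X_set m. \<sigma> ` inv \<sigma> ` y = y"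
    using permutes_inverses[OF stab_permutes[OF assms]] by (simp_all add: image_comp)
  show "(`) \<sigma> ` X_set m \<subseteq> X_set m" "(`) (inv \<sigma>) ` X_set m \<subseteq> X_set m"
    using stab_image_in_X_set[OF assms] stab_image_in_X_set[OF stab_inv[OF assms]] by auto
qed

lemma stab_dist_x0:
  assumes "\<sigma> \<in> stab m" "y \<in> X_set m"
  shows "dist_O m (x0 m) (\<sigma> ` y) = dist_O m (x0 m) y"
proof -
  have "sym_diff (x0 m) (\<sigma> ` y) = \<sigma> ` sym_diff (x0 m) y"
    using stab_image_x0[OF assms(1)] stab_inj[OF assms(1)] by (metis image_Un image_set_diff)
  then have "card (sym_diff (x0 m) (\<sigma> ` y)) = card (sym_diff (x0 m) y)"
    using card_image[OF inj_on_subset[OF stab_inj[OF assms(1)]]] by simp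
  then show ?thesis
    using assms stab_image_in_X_set x0_in_X_set by (simp add: dist_O_eq_card_sym_diff)
qed

lemma stab_adj:
  assumes "\<sigma> \<in> stab m" "y \<in> X_set m" "z \<in> X_set m"
  shows "adj m (\<sigma> ` y) (\<sigma> ` z) = adj m y z"
proof -
  have "(\<sigma> ` y \<subset> \<sigma> ` z) = (y \<subset> z)" "(\<sigma> ` z \<subset> \<sigma> ` y) = (z \<subset> y)"
    using inj_image_subset_iff[OF stab_inj[OF assms(1)]] stab_image_eq_iff[OF assms(1)]
    by (auto simp: psubset_eq)
  then show ?thesis
    using assms stab_image_in_X_set unfolding adj_def by simp
qed

section \<open>The Terwilliger algebra is contained in the centralizer algebra\<close>

lemma mat_mult_in_centralizer:
  assumes B: "B \<in> centralizer m" and C: "C \<in> centralizer m"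
  shows "mat_mult m B C \<in> centralizer m"
proof -
  have "mat_mult m B C (\<sigma> ` y) (\<sigma> ` z) = mat_mult m B C y z"
    if \<sigma>: "\<sigma> \<in> stab m" and y: "y \<in> X_set m" and z: "z \<in> X_set m" for \<sigma> y z
  proof -
    have "(\<Sum>w\<in>X_set m. B (\<sigma> ` y) w * C w (\<sigma> ` z))
        = (\<Sum>w\<in>X_set m. B (\<sigma> ` y) (\<sigma> ` w) * C (\<sigma> ` w) (\<sigma> ` z))"
      by (rule sum.reindex_bij_betw[OF stab_bij_betw_X_set[OF \<sigma>], symmetric])
    also have "\<dots> = (\<Sum>w\<in>X_set m. B y w * C w z)"
      using B C \<sigma> y z unfolding centralizer_def by (intro sum.cong) auto
    finally show ?thesis
      using stab_image_in_X_set[OF \<sigma>] y z by (simp add: mat_mult_def)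
  qed
  then show ?thesis
    unfolding centralizer_def is_mat_def by (auto simp: mat_mult_def)
qed

lemma terwilliger_subset_centralizer: "terwilliger m \<subseteq> centralizer m"
proof
  fix B assume "B \<in> terwilliger m"
  then show "B \<in> centralizer m"
  proof (induction rule: terwilliger.induct)
    case gen_one
    show ?case
      using stab_image_in_X_set stab_image_eq_iff
      by (auto simp: centralizer_def is_mat_def mat_one_def)
  next
    case gen_adj
    show ?case
      using stab_adj by (auto simp: centralizer_def is_mat_def adj_mat_def adj_def)
  next
    case (gen_dual i)
    show ?case
      using stab_image_in_X_set stab_image_eq_iff stab_dist_x0
      by (auto simp: centralizer_def is_mat_def dual_idem_def)
  next
    case (cl_add B C)
    then show ?case by (auto simp: centralizer_def is_mat_def mat_add_def)
  next
    case (cl_smult B c)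
    then show ?case by (auto simp: centralizer_def is_mat_def mat_smult_def)
  next
    case (cl_mult B C)
    then show ?case by (simp add: mat_mult_in_centralizer)
  qed
qed

section \<open>Orbit matrices span the centralizer algebra\<close>

definition profiles :: "nat \<Rightarrow> venn_counts set" where
  "profiles m = (\<lambda>(y, z). profile m y z) ` (X_set m \<times> X_set m)"

definition orbit_mat :: "nat \<Rightarrow> venn_counts \<Rightarrow> cmat" where
  "orbit_mat m k = (\<lambda>y z. if y \<in> X_set m \<and> z \<in> X_set m \<and> profile m y z = k then 1 else 0)"

definition profile_rep :: "nat \<Rightarrow> venn_counts \<Rightarrow> nat set \<times> nat set" where
  "profile_rep m k = (SOME (y, z). y \<in> X_set m \<and> z \<in> X_set m \<and> profile m y z = k)"

definition orbit_coeff :: "nat \<Rightarrow> cmat \<Rightarrow> venn_counts \<Rightarrow> complex" where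
  "orbit_coeff m B k = case_prod B (profile_rep m k)"

lemma finite_profiles: "finite (profiles m)"
  by (simp add: profiles_def)

lemma profile_in_profiles: "y \<in> X_set m \<Longrightarrow> z \<in> X_set m \<Longrightarrow> profile m y z \<in> profiles m"
  by (force simp: profiles_def)

lemma profile_rep:
  assumes "k \<in> profiles m"
  obtains y z where "profile_rep m k = (y, z)" "y \<in> X_set m" "z \<in> X_set m" "profile m y z = k"
proof -
  have "\<exists>p. case p of (y, z) \<Rightarrow> y \<in> X_set m \<and> z \<in> X_set m \<and> profile m y z = k"
    using assms by (auto simp: profiles_def)
  then have "case profile_rep m k of (y, z) \<Rightarrow> y \<in> X_set m \<and> z \<in> X_set m \<and> profile m y z = k"
    unfolding profile_rep_def by (rule someI_ex)
  then show ?thesis using that by (auto split: prod.splits)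
qed

lemma orbit_coeff_profile:
  assumes B: "B \<in> centralizer m" and "y \<in> X_set m" "z \<in> X_set m"
  shows "orbit_coeff m B (profile m y z) = B y z"
proof -
  obtain y' z' where rep: "profile_rep m (profile m y z) = (y', z')"
    and "y' \<in> X_set m" "z' \<in> X_set m" "profile m y' z' = profile m y z"
    using profile_rep[OF profile_in_profiles[OF assms(2,3)]] by blast
  moreover from this obtain \<sigma> where "\<sigma> \<in> stab m" "\<sigma> ` y' = y" "\<sigma> ` z' = z"
    using assms(2,3) X_set_subset by (metis stab_orbit_of_profile_eq)
  ultimately show ?thesis
    using B by (auto simp: orbit_coeff_def centralizer_def)
qed

lemma centralizer_eq_sum_orbit_mat:
  assumes B: "B \<in> centralizer m"
  shows "B = (\<lambda>y z. \<Sum>k\<in>profiles m. orbit_coeff m B k * orbit_mat m k y z)"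
proof (intro ext)
  fix y z
  show "B y z = (\<Sum>k\<in>profiles m. orbit_coeff m B k * orbit_mat m k y z)"
  proof (cases "y \<in> X_set m \<and> z \<in> X_set m")
    case True
    then have "(\<Sum>k\<in>profiles m. orbit_coeff m B k * orbit_mat m k y z)
        = (\<Sum>k\<in>profiles m. if profile m y z = k then orbit_coeff m B k else 0)"
      by (intro sum.cong) (auto simp: orbit_mat_def)
    also have "\<dots> = B y z"
      using True profile_in_profiles finite_profiles orbit_coeff_profile[OF B] by simp
    finally show ?thesis ..
  next
    case False
    then show ?thesis
      using B by (auto simp: centralizer_def is_mat_def orbit_mat_def)
  qed
qed

lemma zero_in_terwilliger: "(\<lambda>y z. 0) \<in> terwilliger m"
  using terwilliger.cl_smult[OF terwilliger.gen_one, where c = 0] by (simp add: mat_smult_def)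

lemma smult_in_terwilliger: "B \<in> terwilliger m \<Longrightarrow> (\<lambda>y z. c * B y z) \<in> terwilliger m"
  using terwilliger.cl_smult[of B m c] by (simp add: mat_smult_def)

lemma sum_in_terwilliger:
  "finite A \<Longrightarrow> (\<And>k. k \<in> A \<Longrightarrow> f k \<in> terwilliger m) \<Longrightarrow> (\<lambda>y z. \<Sum>k\<in>A. f k y z) \<in> terwilliger m"
proof (induction A rule: finite_induct)
  case empty
  then show ?case using zero_in_terwilliger by simp
next
  case (insert a A)
  then have "mat_add (f a) (\<lambda>y z. \<Sum>k\<in>A. f k y z) \<in> terwilliger m"
    by (simp add: terwilliger.cl_add)
  with insert.hyps show ?case by (simp add: mat_add_def)
qed

lemma orbit_mat_in_terwilliger_if_isolated:
  assumes B: "B \<in> terwilliger m" and k: "k \<in> profiles m" "orbit_coeff m B k \<noteq> 0"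
    and others: "\<And>k'. k' \<in> profiles m \<Longrightarrow> k' \<noteq> k \<Longrightarrow> orbit_coeff m B k' \<noteq> 0 \<Longrightarrow>
      orbit_mat m k' \<in> terwilliger m"
  shows "orbit_mat m k \<in> terwilliger m"
proof -
  define R where "R = (\<lambda>y z. \<Sum>k'\<in>profiles m - {k}. orbit_coeff m B k' * orbit_mat m k' y z)"
  have "(\<lambda>y z. orbit_coeff m B k' * orbit_mat m k' y z) \<in> terwilliger m" if "k' \<in> profiles m - {k}" for k'
  proof (cases "orbit_coeff m B k' = 0")
    case True
    then show ?thesis using zero_in_terwilliger by simp
  next
    case False
    then show ?thesis using others that smult_in_terwilliger by blast
  qed
  then have "R \<in> terwilliger m"
    unfolding R_def using finite_profiles by (intro sum_in_terwilliger) auto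
  moreover have "B y z = orbit_coeff m B k * orbit_mat m k y z + R y z" for y z
    using centralizer_eq_sum_orbit_mat[OF subsetD[OF terwilliger_subset_centralizer B]]
    by (subst (asm) fun_eq_iff) (simp add: R_def sum.remove[OF finite_profiles k(1)])
  then have "orbit_mat m k = mat_smult (1 / orbit_coeff m B k) (mat_add B (mat_smult (-1) R))"
    using k(2) by (auto simp: fun_eq_iff mat_smult_def mat_add_def field_simps)
  ultimately show ?thesis
    using B by (simp add: terwilliger.cl_smult terwilliger.cl_add)
qed

section \<open>Orbit matrices lie in the Terwilliger algebra\<close>

lemma bool_square_eqI:
  fixes f g :: "bool \<Rightarrow> bool \<Rightarrow> nat"
  assumes rows: "\<And>i. f i True + f i False = g i True + g i False"
    and cols: "\<And>j. f True j + f False j = g True j + g False j"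
    and off_diag: "f True False + f False True = g True False + g False True"
  shows "f = g"
proof -
  have "f True True = g True True" "f True False = g True False"
    "f False True = g False True" "f False False = g False False"
    using rows[of True] rows[of False] cols[of True] cols[of False] off_diag by linarith+
  then show ?thesis
    by (simp add: fun_eq_iff all_bool_eq)
qed

lemma agree_on_side_if_subset:
  assumes "w \<subseteq> z" "vertex_profile m w (a, True) = vertex_profile m z (a, True)"
  shows "\<forall>x\<in>S_set m. (x \<in> x0 m) = a \<longrightarrow> (x \<in> w \<longleftrightarrow> x \<in> z)"
proof -
  have "{x \<in> S_set m. (x \<in> x0 m, x \<in> w) = (a, True)} = {x \<in> S_set m. (x \<in> x0 m, x \<in> z) = (a, True)}"
    using assms by (intro card_subset_eq) (auto simp: vertex_profile_def)
  then show ?thesis using assms(1) by blast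
qed

lemma adj_agree_on_side_iff:
  assumes "adj m w z"
  shows "(\<forall>x\<in>S_set m. (x \<in> x0 m) = a \<longrightarrow> (x \<in> w \<longleftrightarrow> x \<in> z))
    \<longleftrightarrow> vertex_profile m w (a, True) = vertex_profile m z (a, True)"
proof
  assume "\<forall>x\<in>S_set m. (x \<in> x0 m) = a \<longrightarrow> (x \<in> w \<longleftrightarrow> x \<in> z)"
  then have "{x \<in> S_set m. (x \<in> x0 m, x \<in> w) = (a, True)} = {x \<in> S_set m. (x \<in> x0 m, x \<in> z) = (a, True)}"
    by auto
  then show "vertex_profile m w (a, True) = vertex_profile m z (a, True)"
    by (simp add: vertex_profile_def)
next
  assume "vertex_profile m w (a, True) = vertex_profile m z (a, True)"
  then show "\<forall>x\<in>S_set m. (x \<in> x0 m) = a \<longrightarrow> (x \<in> w \<longleftrightarrow> x \<in> z)"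
    using assms agree_on_side_if_subset[of w z m a] agree_on_side_if_subset[of z w m a]
    by (auto simp: adj_def)
qed

lemma adj_agree_on_some_side:
  assumes "adj m w z"
  obtains a where "\<forall>x\<in>S_set m. (x \<in> x0 m) = a \<longrightarrow> (x \<in> w \<longleftrightarrow> x \<in> z)"
proof -
  obtain e where "sym_diff w z = {e}"
    using adj_card_sym_diff[OF assms] card_1_singletonE by blast
  then have "\<forall>x\<in>S_set m. (x \<in> x0 m) = (e \<notin> x0 m) \<longrightarrow> (x \<in> w \<longleftrightarrow> x \<in> z)"
    by (metis Diff_iff Un_iff singletonD)
  then show ?thesis using that by blast
qed

lemma profile_eq_if_agree_on_side:
  assumes "\<forall>x\<in>S_set m. (x \<in> x0 m) = a \<longrightarrow> (x \<in> w \<longleftrightarrow> x \<in> z)"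
  shows "profile m y z (a, b, c) = profile m y w (a, b, c)"
proof -
  have "{x \<in> S_set m. (x \<in> x0 m, x \<in> y, x \<in> z) = (a, b, c)}
      = {x \<in> S_set m. (x \<in> x0 m, x \<in> y, x \<in> w) = (a, b, c)}"
    using assms by auto
  then show ?thesis by (simp add: profile_def)
qed

lemma profile_eq_of_adj_step:
  assumes y: "y \<in> X_set m" and z: "z \<in> X_set m" and y': "y' \<in> X_set m" and z': "z' \<in> X_set m"
    and adj: "adj m w z" and adj': "adj m w' z'" and step: "profile m y' w' = profile m y w"
    and level: "vertex_profile m z' = vertex_profile m z"
    and dist: "card (sym_diff y' z') = card (sym_diff y z)"
  shows "profile m y' z' = profile m y z"
proof -
  obtain a where side: "\<forall>x\<in>S_set m. (x \<in> x0 m) = a \<longrightarrow> (x \<in> w \<longleftrightarrow> x \<in> z)"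
    using adj_agree_on_some_side[OF adj] by blast
  have level_y: "vertex_profile m y' = vertex_profile m y"
    using profile_sum_right[of m y' w', symmetric] profile_sum_right[of m y w, symmetric] step
    by (simp add: fun_eq_iff)
  have "vertex_profile m w' = vertex_profile m w"
    using profile_sum_middle[of m y' w', symmetric] profile_sum_middle[of m y w, symmetric] step
    by (simp add: fun_eq_iff)
  then have side': "\<forall>x\<in>S_set m. (x \<in> x0 m) = a \<longrightarrow> (x \<in> w' \<longleftrightarrow> x \<in> z')"
    using side level adj_agree_on_side_iff[OF adj] adj_agree_on_side_iff[OF adj'] by simp
  \<comment> \<open>on the side \<open>a\<close> of \<open>x0\<close> the step from \<open>w\<close> to \<open>z\<close> changes nothing\<close>
  have same_side: "profile m y' z' (a, b, c) = profile m y z (a, b, c)" for b c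
    using profile_eq_if_agree_on_side[OF side', of y' b c] profile_eq_if_agree_on_side[OF side, of y b c]
      step by simp
  \<comment> \<open>on the other side, the margins and the number of changed elements fix the profile\<close>
  have "(\<lambda>b c. profile m y' z' (\<not> a, b, c)) = (\<lambda>b c. profile m y z (\<not> a, b, c))"
  proof (rule bool_square_eqI)
    show "profile m y' z' (\<not> a, b, True) + profile m y' z' (\<not> a, b, False)
        = profile m y z (\<not> a, b, True) + profile m y z (\<not> a, b, False)" for b
      using level_y by (simp add: profile_sum_right)
    show "profile m y' z' (\<not> a, True, c) + profile m y' z' (\<not> a, False, c)
        = profile m y z (\<not> a, True, c) + profile m y z (\<not> a, False, c)" for c
      using level by (simp add: profile_sum_middle)
    show "profile m y' z' (\<not> a, True, False) + profile m y' z' (\<not> a, False, True)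
        = profile m y z (\<not> a, True, False) + profile m y z (\<not> a, False, True)"
      using dist card_sym_diff_eq_profile[OF X_set_subset[OF y] X_set_subset[OF z]]
        card_sym_diff_eq_profile[OF X_set_subset[OF y'] X_set_subset[OF z']]
        same_side[of True False] same_side[of False True]
      by (cases a) simp_all
  qed
  then have "profile m y' z' (\<not> a, b, c) = profile m y z (\<not> a, b, c)" for b c
    by (simp add: fun_eq_iff)
  with same_side have "profile m y' z' (a', b, c) = profile m y z (a', b, c)" for a' b c
    by (cases a'; cases a) simp_all
  then show ?thesis
    by (simp add: fun_eq_iff)
qed

lemma orbit_mat_adj_entry:
  assumes "y \<in> X_set m" "z \<in> X_set m"
  shows "mat_mult m (orbit_mat m k) (adj_mat m) y z = card {u \<in> X_set m. profile m y u = k \<and> adj m u z}"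
proof -
  have "mat_mult m (orbit_mat m k) (adj_mat m) y z = (\<Sum>u\<in>X_set m. orbit_mat m k y u * adj_mat m u z)"
    using assms by (simp add: mat_mult_def)
  also have "\<dots> = (\<Sum>u\<in>X_set m. of_bool (profile m y u = k \<and> adj m u z))"
    using assms by (intro sum.cong) (auto simp: orbit_mat_def adj_mat_def)
  also have "\<dots> = card (X_set m \<inter> {u. profile m y u = k \<and> adj m u z})"
    by simp
  also have "X_set m \<inter> {u. profile m y u = k \<and> adj m u z} = {u \<in> X_set m. profile m y u = k \<and> adj m u z}"
    by blast
  finally show ?thesis .
qed

lemma orbit_mat_adj_dual_entry:
  "mat_mult m (mat_mult m (orbit_mat m k) (adj_mat m)) (dual_idem m D) y z =
    (if y \<in> X_set m \<and> z \<in> X_set m \<and> dist_O m (x0 m) z = D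
     then card {u \<in> X_set m. profile m y u = k \<and> adj m u z} else 0)"
proof (cases "y \<in> X_set m \<and> z \<in> X_set m")
  case True
  let ?Q = "mat_mult m (orbit_mat m k) (adj_mat m)"
  have "mat_mult m ?Q (dual_idem m D) y z = (\<Sum>w\<in>X_set m. ?Q y w * dual_idem m D w z)"
    using True by (simp add: mat_mult_def)
  also have "\<dots> = (\<Sum>w\<in>X_set m. if w = z then ?Q y z * of_bool (dist_O m (x0 m) z = D) else 0)"
    by (intro sum.cong) (auto simp: dual_idem_def)
  also have "\<dots> = ?Q y z * of_bool (dist_O m (x0 m) z = D)"
    using True by simp
  finally show ?thesis
    using True orbit_mat_adj_entry by simp
qed (auto simp: mat_mult_def)

lemma orbit_mat_adj_dual_support:
  assumes y: "y \<in> X_set m" and z: "z \<in> X_set m" and w: "w \<in> X_set m" and adj: "adj m w z"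
    and closer: "card (sym_diff y w) + 1 = card (sym_diff y z)"
    and y': "y' \<in> X_set m" and z': "z' \<in> X_set m"
    and nonzero: "mat_mult m (mat_mult m (orbit_mat m (profile m y w)) (adj_mat m))
      (dual_idem m (dist_O m (x0 m) z)) y' z' \<noteq> 0"
  shows "profile m y' z' = profile m y z \<or> card (sym_diff y' z') < card (sym_diff y z)"
proof -
  have level: "dist_O m (x0 m) z' = dist_O m (x0 m) z"
    and "\<exists>w'. w' \<in> X_set m \<and> profile m y' w' = profile m y w \<and> adj m w' z'"
    using nonzero by (auto simp: orbit_mat_adj_dual_entry card_gt_0_iff split: if_splits)
  then obtain w' where w': "w' \<in> X_set m" "profile m y' w' = profile m y w" "adj m w' z'"
    by blast
  have "card (sym_diff y' w') = card (sym_diff y w)"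
    using card_sym_diff_eq_profile w' w y y' X_set_subset by metis
  moreover have "card (sym_diff y' z') \<le> card (sym_diff y' w') + card (sym_diff w' z')"
    using y' z' w' by (intro card_sym_diff_triangle) (simp_all add: finite_X_set_elem)
  ultimately have "card (sym_diff y' z') \<le> card (sym_diff y z)"
    using adj_card_sym_diff[OF w'(3)] closer by simp
  moreover have "profile m y' z' = profile m y z" if "card (sym_diff y' z') = card (sym_diff y z)"
    using profile_eq_of_adj_step[OF y z y' z' adj w'(3,2)] vertex_profile_eq_if_dist_eq[OF z' z level] that
    by simp
  ultimately show ?thesis by linarith
qed

lemma orbit_mat_diag:
  assumes y: "y \<in> X_set m"
  shows "orbit_mat m (profile m y y) = dual_idem m (dist_O m (x0 m) y)"
proof -
  have "(y' \<in> X_set m \<and> z' \<in> X_set m \<and> profile m y' z' = profile m y y)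
    \<longleftrightarrow> (y' \<in> X_set m \<and> y' = z' \<and> dist_O m (x0 m) y' = dist_O m (x0 m) y)" for y' z'
  proof
    assume *: "y' \<in> X_set m \<and> z' \<in> X_set m \<and> profile m y' z' = profile m y y"
    then have "card (sym_diff y' z') = 0"
      using card_sym_diff_eq_profile[OF X_set_subset X_set_subset, of y' m z'] by (simp add: profile_diag)
    then have "y' = z'"
      using * finite_X_set_elem by (auto simp: card_eq_0_iff)
    have "vertex_profile m y' (a, b) = vertex_profile m y (a, b)" for a b
      using fun_cong[OF conjunct2[OF conjunct2[OF *]], of "(a, b, b)"] \<open>y' = z'\<close> by (simp add: profile_diag)
    then have "vertex_profile m y' = vertex_profile m y"
      by (simp add: fun_eq_iff)
    with * \<open>y' = z'\<close> show "y' \<in> X_set m \<and> y' = z' \<and> dist_O m (x0 m) y' = dist_O m (x0 m) y"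
      using y by (simp add: dist_x0_eq_vertex_profile)
  next
    assume "y' \<in> X_set m \<and> y' = z' \<and> dist_O m (x0 m) y' = dist_O m (x0 m) y"
    then show "y' \<in> X_set m \<and> z' \<in> X_set m \<and> profile m y' z' = profile m y y"
      using vertex_profile_eq_if_dist_eq[OF _ y] by (auto simp: fun_eq_iff profile_diag)
  qed
  then show ?thesis
    by (simp add: fun_eq_iff orbit_mat_def dual_idem_def)
qed

lemma orbit_mat_in_terwilliger:
  assumes "y \<in> X_set m" "z \<in> X_set m"
  shows "orbit_mat m (profile m y z) \<in> terwilliger m"
  using assms
proof (induction "card (sym_diff y z)" arbitrary: y z rule: less_induct)
  case less
  show ?case
  proof (cases "y = z")
    case True
    then show ?thesis
      using less.prems orbit_mat_diag dist_x0_le terwilliger.gen_dual by simp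
  next
    case False
    obtain w where w: "w \<in> X_set m" "adj m w z" "card (sym_diff y w) + 1 = card (sym_diff y z)"
      using exists_adj_closer[OF less.prems False] .
    define P where "P = mat_mult m (mat_mult m (orbit_mat m (profile m y w)) (adj_mat m))
      (dual_idem m (dist_O m (x0 m) z))"
    have P: "P \<in> terwilliger m"
      unfolding P_def using less w dist_x0_le
      by (intro terwilliger.cl_mult terwilliger.gen_adj terwilliger.gen_dual) auto
    show ?thesis
    proof (rule orbit_mat_in_terwilliger_if_isolated[OF P profile_in_profiles[OF less.prems]])
      have "w \<in> {u \<in> X_set m. profile m y u = profile m y w \<and> adj m u z}"
        using w by simp
      then have "P y z \<noteq> 0"
        using less.prems by (auto simp: P_def orbit_mat_adj_dual_entry card_gt_0_iff)
      moreover have "orbit_coeff m P (profile m y z) = P y z"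
        using orbit_coeff_profile less.prems terwilliger_subset_centralizer P by blast
      ultimately show "orbit_coeff m P (profile m y z) \<noteq> 0"
        by simp
    next
      fix k assume k: "k \<in> profiles m" "k \<noteq> profile m y z" "orbit_coeff m P k \<noteq> 0"
      obtain y' z' where rep: "profile_rep m k = (y', z')" "y' \<in> X_set m" "z' \<in> X_set m"
        and "profile m y' z' = k"
        using profile_rep[OF k(1)] .
      moreover from this have "P y' z' \<noteq> 0"
        using k(3) by (simp add: orbit_coeff_def)
      ultimately have "card (sym_diff y' z') < card (sym_diff y z)"
        using orbit_mat_adj_dual_support[OF less.prems w] k(2) unfolding P_def by blast
      then show "orbit_mat m k \<in> terwilliger m"
        using less.hyps rep \<open>profile m y' z' = k\<close> by blast
    qed
  qed
qed

text \<open>The argument works for every \<open>m\<close>.\<close>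

theorem theorem4p11:
  fixes m :: nat
  assumes "m \<ge> 3"
  shows "terwilliger m = centralizer m"
proof
  show "terwilliger m \<subseteq> centralizer m"
    by (rule terwilliger_subset_centralizer)
  show "centralizer m \<subseteq> terwilliger m"
  proof
    fix B assume B: "B \<in> centralizer m"
    have "orbit_mat m k \<in> terwilliger m" if "k \<in> profiles m" for k
      using profile_rep[OF that] orbit_mat_in_terwilliger by metis
    then have "(\<lambda>y z. \<Sum>k\<in>profiles m. orbit_coeff m B k * orbit_mat m k y z) \<in> terwilliger m"
      by (intro sum_in_terwilliger finite_profiles smult_in_terwilliger)
    then show "B \<in> terwilliger m"
      using centralizer_eq_sum_orbit_mat[OF B] by simp
  qed
qed

end
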